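(* Let $K_{\alpha\beta}$ be a second order Killing tensor on an arbitrary Riemannian manifold $(M,g)$. Then the third of the Nijenhuis integrability conditions, $$0=N^{\delta}{}_{[\beta\gamma}K_{\alpha]\varepsilon}K^{\varepsilon}{}_{\delta},$$ is redundant, i.e.\ it is implied by the Killing equation together with the first two Nijenhuis conditions $$0=N^{\delta}{}_{[\beta\gamma}g_{\alpha]\delta},\qquad 0=N^{\delta}{}_{[\beta\gamma}K_{\alpha]\delta}.$$ The same holds true on a pseudo-Riemannian manifold.
   Context: A second order Killing tensor is a symmetric tensor field $K_{\alpha\beta}$ satisfying the Killing equation $\nabla_\alpha K_{\beta\gamma}+\nabla_\beta K_{\gamma\alpha}+\nabla_\gamma K_{\alpha\beta}=0$. It is regarded as an endomorphism field $K^{\alpha}{}_{\beta}$ via the metric $g$. Its Nijenhuis torsion is $N(X,Y)=K^2[X,Y]-K[KX,Y]-K[X,KY]+[KX,KY]$, given in local coordinates by $N^{\alpha}{}_{\beta\gamma}=K^{\alpha}{}_{\delta}K^{\delta}{}_{[\beta;\gamma]}+K^{\delta}{}_{[\beta}K^{\alpha}{}_{\gamma];\delta}$, where a semicolon denotes a covariant derivative and square brackets denote antisymmetrisation. The Nijenhuis integrability conditions are the three equations $0=N^{\delta}{}_{[\beta\gamma}g_{\alpha]\delta}$, $0=N^{\delta}{}_{[\beta\gamma}K_{\alpha]\delta}$, $0=N^{\delta}{}_{[\beta\gamma}K_{\alpha]\varepsilon}K^{\varepsilon}{}_{\delta}$; for an endomorphism with simple eigenvalues they are equivalent to integrability (the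 orthogonal complements of each eigenvector field form integrable distributions). The theorem does not assume that the eigenvalues of $K$ are simple. *)

theory Defs
  imports "HOL-Analysis.Analysis"
begin

text \<open>A (pseudo-)Riemannian metric on an open coordinate
  domain U of R^n is a field of symmetric nondegenerate matrices g x, with g x $ a $ b = g_{ab}.\<close>

definition pd :: "(real^'n \<Rightarrow> real) \<Rightarrow> 'n \<Rightarrow> real^'n \<Rightarrow> real" where
  "pd f i x = frechet_derivative f (at x) (axis i 1)"

definition ginv :: "(real^'n \<Rightarrow> real^'n^'n) \<Rightarrow> real^'n \<Rightarrow> real^'n^'n" where
  "ginv g x = matrix_inv (g x)"

definition christoffel :: "(real^'n \<Rightarrow> real^'n^'n) \<Rightarrow> real^'n \<Rightarrow> 'n \<Rightarrow> 'n \<Rightarrow> 'n \<Rightarrow> real" where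
  "christoffel g x a b c = (1/2) * (\<Sum>d\<in>UNIV. ginv g x $ a $ d *
      (pd (\<lambda>y. g y $ d $ c) b x + pd (\<lambda>y. g y $ d $ b) c x - pd (\<lambda>y. g y $ b $ c) d x))"

text \<open>Covariant derivative of a covariant 2-tensor: covd g K x b c a = K_{bc;a}.\<close>
definition covd :: "(real^'n \<Rightarrow> real^'n^'n) \<Rightarrow> (real^'n \<Rightarrow> real^'n^'n) \<Rightarrow> real^'n \<Rightarrow> 'n \<Rightarrow> 'n \<Rightarrow> 'n \<Rightarrow> real" where
  "covd g K x b c a = pd (\<lambda>y. K y $ b $ c) a x
     - (\<Sum>d\<in>UNIV. christoffel g x d a b * K x $ d $ c)
     - (\<Sum>d\<in>UNIV. christoffel g x d a c * K x $ b $ d)"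

text \<open>Mixed tensor K^a_b = g^{ac} K_{cb} (endomorphism via the metric), and its covariant
  derivative K^a_{b;c} = g^{ad} K_{db;c} (index raising commutes with nabla since nabla g = 0).\<close>
definition mixed :: "(real^'n \<Rightarrow> real^'n^'n) \<Rightarrow> (real^'n \<Rightarrow> real^'n^'n) \<Rightarrow> real^'n \<Rightarrow> 'n \<Rightarrow> 'n \<Rightarrow> real" where
  "mixed g K x a b = (\<Sum>c\<in>UNIV. ginv g x $ a $ c * K x $ c $ b)"

definition mixed_covd :: "(real^'n \<Rightarrow> real^'n^'n) \<Rightarrow> (real^'n \<Rightarrow> real^'n^'n) \<Rightarrow> real^'n \<Rightarrow> 'n \<Rightarrow> 'n \<Rightarrow> 'n \<Rightarrow> real" where
  "mixed_covd g K x a b c = (\<Sum>d\<in>UNIV. ginv g x $ a $ d * covd g K x d b c)"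

definition nijenhuis :: "(real^'n \<Rightarrow> real^'n^'n) \<Rightarrow> (real^'n \<Rightarrow> real^'n^'n) \<Rightarrow> real^'n \<Rightarrow> 'n \<Rightarrow> 'n \<Rightarrow> 'n \<Rightarrow> real" where
  "nijenhuis g K x a b c =
     (\<Sum>d\<in>UNIV. mixed g K x a d * ((mixed_covd g K x d b c - mixed_covd g K x d c b) / 2))
   + (\<Sum>d\<in>UNIV. (mixed g K x d b * mixed_covd g K x a c d - mixed g K x d c * mixed_covd g K x a b d) / 2)"

definition alt3 :: "('n \<Rightarrow> 'n \<Rightarrow> 'n \<Rightarrow> real) \<Rightarrow> 'n \<Rightarrow> 'n \<Rightarrow> 'n \<Rightarrow> real" where
  "alt3 T a b c = (T a b c + T b c a + T c a b - T b a c - T a c b - T c b a) / 6"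

definition nij_cond :: "(real^'n \<Rightarrow> real^'n^'n) \<Rightarrow> (real^'n \<Rightarrow> real^'n^'n) \<Rightarrow> real^'n \<Rightarrow> ('n \<Rightarrow> 'n \<Rightarrow> real) \<Rightarrow> bool" where
  "nij_cond g K x X \<longleftrightarrow> (\<forall>a b c. alt3 (\<lambda>a b c. \<Sum>d\<in>UNIV. nijenhuis g K x d b c * X a d) a b c = 0)"

definition pseudo_riemannian_on :: "(real^'n) set \<Rightarrow> (real^'n \<Rightarrow> real^'n^'n) \<Rightarrow> bool" where
  "pseudo_riemannian_on U g \<longleftrightarrow> open U \<and>
     (\<forall>x\<in>U. transpose (g x) = g x \<and> det (g x) \<noteq> 0 \<and> g differentiable (at x))"

definition killing_tensor_on :: "(real^'n) set \<Rightarrow> (real^'n \<Rightarrow> real^'n^'n) \<Rightarrow> (real^'n \<Rightarrow> real^'n^'n) \<Rightarrow> bool" where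
  "killing_tensor_on U g K \<longleftrightarrow>
     (\<forall>x\<in>U. transpose (K x) = K x \<and> K differentiable (at x) \<and>
        (\<forall>a b c. covd g K x b c a + covd g K x c a b + covd g K x a b c = 0))"

end

(*
  Lower the free index of the torsion with the metric. With M = K^a_b and C_{abc} = K_{ab;c},
  the lowered torsion N_{abc} is the (bc)-antisymmetric part of (M x 1 x 1) C - (1 x 1 x M) C,
  and contracting N^d_{bc} with g, K, K^2 in place of g_{ad} applies M^0, M^1, M^2 to its first
  slot. Writing alpha(p,q,r) for the full alternation of (M^p x M^q x M^r) C, the k-th
  Nijenhuis condition thus reads alpha(k+1,0,0) = alpha(k,0,1).

  C is symmetric in its first two slots, so alpha(q,p,r) = -alpha(p,q,r); the Killing equation
  makes the cyclic sum of C vanish, so alpha(p,q,r) + alpha(q,r,p) + alpha(r,p,q) = 0. Finally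
  alternation commutes with the action of M (and of M^2) as a derivation, so whenever
  alpha(p,q,r) vanishes identically, so does alpha(p+1,q,r) + alpha(p,q+1,r) + alpha(p,q,r+1),
  and likewise with steps of 2. The conditions for k = 0, 1 give
  alpha(1,0,0) = alpha(2,0,0) = alpha(1,0,1) = 0, and the relations these produce form a linear
  system forcing alpha(3,0,0) = alpha(2,0,1) = 0, which contains the condition for k = 2.
*)

theory Submission
  imports Defs "HOL-Library.Function_Algebras"
begin

type_synonym 'n tensor3 = "'n \<Rightarrow> 'n \<Rightarrow> 'n \<Rightarrow> real"

definition act1 :: "real^'n^'n \<Rightarrow> 'n tensor3 \<Rightarrow> 'n tensor3" where
  "act1 M T = (\<lambda>a b c. \<Sum>f\<in>UNIV. M $ f $ a * T f b c)"

definition act2 :: "real^'n^'n \<Rightarrow> 'n tensor3 \<Rightarrow> 'n tensor3" where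
  "act2 M T = (\<lambda>a b c. \<Sum>f\<in>UNIV. M $ f $ b * T a f c)"

definition act3 :: "real^'n^'n \<Rightarrow> 'n tensor3 \<Rightarrow> 'n tensor3" where
  "act3 M T = (\<lambda>a b c. \<Sum>f\<in>UNIV. M $ f $ c * T a b f)"

definition deriv_act :: "real^'n^'n \<Rightarrow> 'n tensor3 \<Rightarrow> 'n tensor3" where
  "deriv_act M T = act1 M T + act2 M T + act3 M T"

definition act_pow :: "real^'n^'n \<Rightarrow> nat \<Rightarrow> nat \<Rightarrow> nat \<Rightarrow> 'n tensor3 \<Rightarrow> 'n tensor3"
  where
  "act_pow M p q r C = (act1 M ^^ p) ((act2 M ^^ q) ((act3 M ^^ r) C))"

definition swap12 :: "'n tensor3 \<Rightarrow> 'n tensor3" where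
  "swap12 T = (\<lambda>a b c. T b a c)"

definition rotate3 :: "'n tensor3 \<Rightarrow> 'n tensor3" where
  "rotate3 T = (\<lambda>a b c. T b c a)"

lemma act1_act2_commute: "act1 M (act2 N T) = act2 N (act1 M T)"
  unfolding act1_def act2_def fun_eq_iff
  by (simp add: sum_distrib_left mult.left_commute, subst sum.swap, simp)

lemma act1_act3_commute: "act1 M (act3 N T) = act3 N (act1 M T)"
  unfolding act1_def act3_def fun_eq_iff
  by (simp add: sum_distrib_left mult.left_commute, subst sum.swap, simp)

lemma act2_act3_commute: "act2 M (act3 N T) = act3 N (act2 M T)"
  unfolding act2_def act3_def fun_eq_iff
  by (simp add: sum_distrib_left mult.left_commute, subst sum.swap, simp)

lemma act1_add: "act1 M (X + Y) = act1 M X + act1 M Y"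
  by (simp add: act1_def fun_eq_iff sum.distrib distrib_left)

lemma act2_add: "act2 M (X + Y) = act2 M X + act2 M Y"
  by (simp add: act2_def fun_eq_iff sum.distrib distrib_left)

lemma act3_add: "act3 M (X + Y) = act3 M X + act3 M Y"
  by (simp add: act3_def fun_eq_iff sum.distrib distrib_left)

lemma act1_diff: "act1 M (X - Y) = act1 M X - act1 M Y"
  by (simp add: act1_def fun_eq_iff sum_subtractf right_diff_distrib)

lemma act1_mult: "act1 (M ** N) T = act1 N (act1 M T)"
  unfolding act1_def matrix_matrix_mult_def fun_eq_iff
  by (simp add: sum_distrib_left sum_distrib_right, subst sum.swap, simp add: mult_ac)

lemma act2_mult: "act2 (M ** N) T = act2 N (act2 M T)"
  unfolding act2_def matrix_matrix_mult_def fun_eq_iff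
  by (simp add: sum_distrib_left sum_distrib_right, subst sum.swap, simp add: mult_ac)

lemma act3_mult: "act3 (M ** N) T = act3 N (act3 M T)"
  unfolding act3_def matrix_matrix_mult_def fun_eq_iff
  by (simp add: sum_distrib_left sum_distrib_right, subst sum.swap, simp add: mult_ac)

lemma act1_swap12: "act1 M (swap12 T) = swap12 (act2 M T)"
  and act2_swap12: "act2 M (swap12 T) = swap12 (act1 M T)"
  and act3_swap12: "act3 M (swap12 T) = swap12 (act3 M T)"
  by (simp_all add: act1_def act2_def act3_def swap12_def)

lemma act1_rotate3: "act1 M (rotate3 T) = rotate3 (act3 M T)"
  and act2_rotate3: "act2 M (rotate3 T) = rotate3 (act1 M T)"
  and act3_rotate3: "act3 M (rotate3 T) = rotate3 (act2 M T)"
  by (simp_all add: act1_def act2_def act3_def rotate3_def)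

lemma funpow_intertwine:
  assumes "\<And>X. F (P X) = P (G X)"
  shows "(F ^^ n) (P X) = P ((G ^^ n) X)"
  by (induction n) (simp_all add: assms)

lemma funpow_additive:
  fixes F :: "'a::plus \<Rightarrow> 'a"
  assumes "\<And>X Y. F (X + Y) = F X + F Y"
  shows "(F ^^ n) (X + Y) = (F ^^ n) X + (F ^^ n) Y"
  by (induction n) (simp_all add: assms)

lemma funpow_funpow_commute:
  assumes "\<And>X. F (G X) = G (F X)"
  shows "(F ^^ m) ((G ^^ n) X) = (G ^^ n) ((F ^^ m) X)"
  by (rule funpow_intertwine, rule funpow_intertwine[symmetric]) (simp add: assms)

lemma act1_act_pow: "act1 M (act_pow M p q r C) = act_pow M (Suc p) q r C"
  by (simp add: act_pow_def)

lemma act2_act_pow: "act2 M (act_pow M p q r C) = act_pow M p (Suc q) r C"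
  unfolding act_pow_def
  by (simp add: funpow_intertwine[where F = "act1 M" and G = "act1 M" and P = "act2 M", OF act1_act2_commute])

lemma act3_act_pow: "act3 M (act_pow M p q r C) = act_pow M p q (Suc r) C"
  unfolding act_pow_def
  by (simp add: funpow_intertwine[where F = "act1 M" and G = "act1 M" and P = "act3 M", OF act1_act3_commute]
      funpow_intertwine[where F = "act2 M" and G = "act2 M" and P = "act3 M", OF act2_act3_commute])

lemma act_pow_add: "act_pow M p q r (X + Y) = act_pow M p q r X + act_pow M p q r Y"
  by (simp add: act_pow_def funpow_additive act1_add act2_add act3_add)

lemma act_pow_zero: "act_pow M p q r 0 = 0"
  using act_pow_add[of M p q r 0 0] by simp

lemma act_pow_swap12: "act_pow M p q r (swap12 C) = swap12 (act_pow M q p r C)"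
proof -
  have "act_pow M p q r (swap12 C) = swap12 ((act2 M ^^ p) ((act1 M ^^ q) ((act3 M ^^ r) C)))"
    unfolding act_pow_def
    by (simp add: funpow_intertwine[where F = "act1 M" and G = "act2 M" and P = swap12, OF act1_swap12]
        funpow_intertwine[where F = "act2 M" and G = "act1 M" and P = swap12, OF act2_swap12]
        funpow_intertwine[where F = "act3 M" and G = "act3 M" and P = swap12, OF act3_swap12])
  also have "(act2 M ^^ p) ((act1 M ^^ q) X) = (act1 M ^^ q) ((act2 M ^^ p) X)" for X
    by (rule funpow_funpow_commute) (rule act1_act2_commute[symmetric])
  finally show ?thesis by (simp add: act_pow_def)
qed

lemma act_pow_rotate3: "act_pow M p q r (rotate3 C) = rotate3 (act_pow M q r p C)"
proof -
  have "act_pow M p q r (rotate3 C) = rotate3 ((act3 M ^^ p) ((act1 M ^^ q) ((act2 M ^^ r) C)))"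
    unfolding act_pow_def
    by (simp add: funpow_intertwine[where F = "act1 M" and G = "act3 M" and P = rotate3, OF act1_rotate3]
        funpow_intertwine[where F = "act2 M" and G = "act1 M" and P = rotate3, OF act2_rotate3]
        funpow_intertwine[where F = "act3 M" and G = "act2 M" and P = rotate3, OF act3_rotate3])
  also have "(act3 M ^^ p) ((act1 M ^^ q) X) = (act1 M ^^ q) ((act3 M ^^ p) X)" for X
    by (rule funpow_funpow_commute) (rule act1_act3_commute[symmetric])
  also have "(act3 M ^^ p) ((act2 M ^^ r) X) = (act2 M ^^ r) ((act3 M ^^ p) X)" for X
    by (rule funpow_funpow_commute) (rule act2_act3_commute[symmetric])
  finally show ?thesis by (simp add: act_pow_def)
qed

lemma deriv_act_act_pow:
  "deriv_act M (act_pow M p q r C)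
     = act_pow M (Suc p) q r C + act_pow M p (Suc q) r C + act_pow M p q (Suc r) C"
  by (simp add: deriv_act_def act1_act_pow act2_act_pow act3_act_pow)

lemma deriv_act_square_act_pow:
  "deriv_act (M ** M) (act_pow M p q r C)
     = act_pow M (p + 2) q r C + act_pow M p (q + 2) r C + act_pow M p q (r + 2) C"
  by (simp add: deriv_act_def act1_mult act2_mult act3_mult act1_act_pow act2_act_pow act3_act_pow)

lemma alt3_add: "alt3 (X + Y) = alt3 X + alt3 Y"
  by (simp add: alt3_def fun_eq_iff field_simps)

lemma alt3_diff: "alt3 (X - Y) = alt3 X - alt3 Y"
  by (simp add: alt3_def fun_eq_iff field_simps)

lemma alt3_zero: "alt3 0 = 0"
  by (simp add: alt3_def fun_eq_iff)

lemma alt3_swap12: "alt3 (swap12 T) = - alt3 T"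
  by (simp add: alt3_def swap12_def fun_eq_iff field_simps)

lemma alt3_rotate3: "alt3 (rotate3 T) = alt3 T"
  by (simp add: alt3_def rotate3_def fun_eq_iff field_simps)

lemma alt3_deriv_act: "alt3 (deriv_act M T) = deriv_act M (alt3 T)"
  unfolding alt3_def deriv_act_def act1_def act2_def act3_def fun_eq_iff plus_fun_def
  by (simp only: times_divide_eq_right distrib_left right_diff_distrib)
    (simp only: sum_divide_distrib[symmetric] sum.distrib sum_subtractf, simp add: field_simps)

lemma alt3_deriv_act_eq_0: "alt3 T = 0 \<Longrightarrow> alt3 (deriv_act M T) = 0"
  unfolding alt3_deriv_act by (simp add: deriv_act_def act1_def act2_def act3_def zero_fun_def)

lemma alt3_deriv_act_pow:
  assumes "alt3 (act_pow M p q r C) = 0"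
  shows "alt3 (act_pow M (Suc p) q r C) a b c + alt3 (act_pow M p (Suc q) r C) a b c
      + alt3 (act_pow M p q (Suc r) C) a b c = 0"
  using alt3_deriv_act_eq_0[OF assms, of M]
  unfolding deriv_act_act_pow alt3_add by (simp add: fun_eq_iff)

lemma alt3_deriv_square_act_pow:
  assumes "alt3 (act_pow M p q r C) = 0"
  shows "alt3 (act_pow M (p + 2) q r C) a b c + alt3 (act_pow M p (q + 2) r C) a b c
      + alt3 (act_pow M p q (r + 2) C) a b c = 0"
  using alt3_deriv_act_eq_0[OF assms, of "M ** M"]
  unfolding deriv_act_square_act_pow alt3_add by (simp add: fun_eq_iff)

lemma alt3_act_pow_swap12:
  assumes "swap12 C = C"
  shows "alt3 (act_pow M q p r C) = - alt3 (act_pow M p q r C)"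
  using act_pow_swap12[of M q p r C] by (simp add: assms alt3_swap12)

lemma alt3_act_pow_cyclic:
  assumes "C + rotate3 C + rotate3 (rotate3 C) = 0"
  shows "alt3 (act_pow M p q r C) + alt3 (act_pow M q r p C) + alt3 (act_pow M r p q C) = 0"
proof -
  have "act_pow M p q r C + rotate3 (act_pow M q r p C) + rotate3 (rotate3 (act_pow M r p q C)) = 0"
    using arg_cong[OF assms, of "act_pow M p q r"]
    by (simp add: act_pow_add act_pow_zero act_pow_rotate3)
  then have "alt3 (act_pow M p q r C + rotate3 (act_pow M q r p C)
      + rotate3 (rotate3 (act_pow M r p q C))) = alt3 0"
    by simp
  then show ?thesis
    by (simp add: alt3_add alt3_rotate3 alt3_zero)
qed

definition skew23 :: "'n tensor3 \<Rightarrow> 'n tensor3" where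
  "skew23 T = (\<lambda>a b c. (T a b c - T a c b) / 2)"

text \<open>For M = K^a_b and C = K_{ab;c} this is the lowered torsion
  K^f_e K_{f[b;c]} + K^f_{[b} K_{|e|c];f}.\<close>

definition torsion_form :: "real^'n^'n \<Rightarrow> 'n tensor3 \<Rightarrow> 'n tensor3" where
  "torsion_form M C = skew23 (act1 M C - act3 M C)"

lemma act1_skew23: "act1 M (skew23 T) = skew23 (act1 M T)"
  by (simp add: act1_def skew23_def fun_eq_iff sum_divide_distrib[symmetric] sum_subtractf
      right_diff_distrib)

lemma alt3_skew23: "alt3 (skew23 T) = alt3 T"
  by (simp add: alt3_def skew23_def fun_eq_iff field_simps)

lemma act1_funpow_torsion_form:
  "(act1 M ^^ k) (torsion_form M C) = skew23 (act_pow M (Suc k) 0 0 C - act_pow M k 0 1 C)"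
proof (induction k)
  case 0
  then show ?case by (simp add: torsion_form_def act_pow_def fun_diff_def)
next
  case (Suc k)
  then show ?case by (simp only: funpow.simps(2) comp_apply act1_skew23 act1_diff act1_act_pow)
qed

lemma alt3_act1_funpow_torsion_form:
  "alt3 ((act1 M ^^ k) (torsion_form M C))
     = alt3 (act_pow M (Suc k) 0 0 C) - alt3 (act_pow M k 0 1 C)"
  by (simp add: act1_funpow_torsion_form alt3_skew23 alt3_diff)

lemma alt3_torsion_form_third_condition:
  assumes sym: "swap12 C = C" and cyc: "C + rotate3 C + rotate3 (rotate3 C) = 0"
    and cond0: "alt3 (torsion_form M C) = 0" and cond1: "alt3 (act1 M (torsion_form M C)) = 0"
  shows "alt3 (act1 M (act1 M (torsion_form M C))) = 0"
proof -
  define \<alpha> where "\<alpha> p q r = alt3 (act_pow M p q r C)" for p q r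
  have anti: "\<alpha> q p r = - \<alpha> p q r" for p q r
    unfolding \<alpha>_def by (rule alt3_act_pow_swap12[OF sym])
  have anti_diag: "\<alpha> p p r = 0" for p r
    using anti[of p p r] by (simp add: fun_eq_iff)
  have cyclic: "\<alpha> p q r a b c + \<alpha> q r p a b c + \<alpha> r p q a b c = 0" for p q r a b c
    using alt3_act_pow_cyclic[OF cyc, of M p q r] unfolding \<alpha>_def by (simp add: fun_eq_iff)
  have torsion: "alt3 ((act1 M ^^ k) (torsion_form M C)) = \<alpha> (Suc k) 0 0 - \<alpha> k 0 1" for k
    unfolding \<alpha>_def by (rule alt3_act1_funpow_torsion_form)
  have v100: "\<alpha> 1 0 0 = 0"
    using cond0 torsion[of 0] anti_diag[of 0 1] by simp
  have "\<alpha> 2 0 0 = \<alpha> 1 0 1"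
    using cond1 torsion[of 1] by (simp add: numeral_2_eq_2)
  moreover have "\<alpha> 2 0 0 a b c + \<alpha> 1 1 0 a b c + \<alpha> 1 0 1 a b c = 0" for a b c
    using alt3_deriv_act_pow[OF v100[unfolded \<alpha>_def]] by (simp add: \<alpha>_def numeral_2_eq_2)
  ultimately have v200: "\<alpha> 2 0 0 = 0" and v101: "\<alpha> 1 0 1 = 0"
    using anti_diag by (simp_all add: fun_eq_iff)
  have e1: "\<alpha> 3 0 0 a b c + \<alpha> 2 1 0 a b c + \<alpha> 2 0 1 a b c = 0" for a b c
    using alt3_deriv_act_pow[OF v200[unfolded \<alpha>_def]] by (simp add: \<alpha>_def numeral_3_eq_3)
  have e2: "\<alpha> 2 0 1 a b c + \<alpha> 1 0 2 a b c = 0" for a b c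
    using alt3_deriv_act_pow[OF v101[unfolded \<alpha>_def]] anti_diag[of 1 1]
    by (simp add: \<alpha>_def numeral_2_eq_2)
  have e3: "\<alpha> 3 0 0 a b c + \<alpha> 1 2 0 a b c + \<alpha> 1 0 2 a b c = 0" for a b c
    using alt3_deriv_square_act_pow[OF v100[unfolded \<alpha>_def]]
    by (simp add: \<alpha>_def numeral_2_eq_2 numeral_3_eq_3)
  have "\<alpha> 3 0 0 a b c = \<alpha> 2 0 1 a b c" for a b c
    using e1[of a b c] e2[of a b c] e3[of a b c] cyclic[of 2 1 0 a b c] anti[of 2 1 0] anti[of 2 0 1]
    by (simp add: fun_eq_iff)
  then show ?thesis
    using torsion[of 2] by (simp add: fun_eq_iff numeral_2_eq_2 numeral_3_eq_3)
qed

lemma matrix_inv_mult: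
  fixes A :: "'a::semiring_1^'n^'m"
  assumes "invertible A"
  shows "A ** matrix_inv A = mat 1" and "matrix_inv A ** A = mat 1"
proof -
  have "A ** matrix_inv A = mat 1 \<and> matrix_inv A ** A = mat 1"
    using assms unfolding invertible_def matrix_inv_def by (rule someI_ex)
  then show "A ** matrix_inv A = mat 1" and "matrix_inv A ** A = mat 1" by auto
qed

lemma transpose_matrix_inv_symmetric:
  fixes A :: "'a::comm_semiring_1^'n^'n"
  assumes "invertible A" and "transpose A = A"
  shows "transpose (matrix_inv A) = matrix_inv A"
proof -
  have "transpose (matrix_inv A) ** A = mat 1"
    using matrix_inv_mult(1)[OF assms(1)] assms(2) by (metis matrix_transpose_mul transpose_mat)
  then have "transpose (matrix_inv A) = matrix_inv A ** (A ** transpose (matrix_inv A))"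
    by (simp add: matrix_mul_assoc matrix_inv_mult(2)[OF assms(1)])
  also have "A ** transpose (matrix_inv A) = mat 1"
    using matrix_inv_mult(2)[OF assms(1)] assms(2) by (metis matrix_transpose_mul transpose_mat)
  finally show ?thesis by simp
qed

lemma transpose_nth: "transpose A $ i $ j = A $ j $ i"
  by (simp add: Finite_Cartesian_Product.transpose_def)

lemma act1_mat_1: "act1 (mat 1) T = T"
  by (simp add: act1_def mat_def fun_eq_iff if_distrib[of "\<lambda>v. v * _"] cong: if_cong)

lemma pseudo_riemannian_ginv:
  assumes "pseudo_riemannian_on U g" and "x \<in> U"
  shows "transpose (ginv g x) = ginv g x" and "g x ** ginv g x = mat 1"
proof -
  have "invertible (g x)" and "transpose (g x) = g x"
    using assms by (auto simp: pseudo_riemannian_on_def invertible_det_nz)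
  then show "transpose (ginv g x) = ginv g x" and "g x ** ginv g x = mat 1"
    by (simp_all add: ginv_def transpose_matrix_inv_symmetric matrix_inv_mult)
qed

lemma mixed_eq_matrix: "mixed g K x a b = (ginv g x ** K x) $ a $ b"
  by (simp add: mixed_def matrix_matrix_mult_def)

lemma covd_swap12:
  assumes "open U" and "x \<in> U" and "\<forall>y\<in>U. transpose (K y) = K y"
  shows "swap12 (covd g K x) = covd g K x"
proof -
  have K_sym: "K y $ a $ b = K y $ b $ a" if "y \<in> U" for y a b
    using assms(3) that transpose_nth[of "K y" a b] by simp
  have "covd g K x b a c = covd g K x a b c" for a b c
  proof -
    have "((\<lambda>y. K y $ a $ b) has_derivative D) (at x)
        \<longleftrightarrow> ((\<lambda>y. K y $ b $ a) has_derivative D) (at x)" for D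
      by (rule iffI; erule has_derivative_transform_within_open[OF _ assms(1,2)]; simp add: K_sym)
    then have "pd (\<lambda>y. K y $ b $ a) c x = pd (\<lambda>y. K y $ a $ b) c x"
      by (simp add: pd_def frechet_derivative_def)
    then show ?thesis
      using K_sym[OF assms(2)] by (simp add: covd_def algebra_simps)
  qed
  then show ?thesis
    by (simp add: swap12_def fun_eq_iff)
qed

lemma killing_covd_cyclic:
  assumes "killing_tensor_on U g K" and "x \<in> U"
  shows "covd g K x + rotate3 (covd g K x) + rotate3 (rotate3 (covd g K x)) = 0"
  using assms by (simp add: killing_tensor_on_def rotate3_def fun_eq_iff)

lemma nijenhuis_eq_torsion_form:
  fixes g K :: "real^'n \<Rightarrow> real^'n^'n"
  assumes H_sym: "transpose (ginv g x) = ginv g x" and K_sym: "transpose (K x) = K x"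
  shows "nijenhuis g K x d b c
    = (\<Sum>e\<in>UNIV. ginv g x $ d $ e * torsion_form (ginv g x ** K x) (covd g K x) e b c)"
proof -
  define H where "H = ginv g x"
  define M where "M = H ** K x"
  define C where "C = covd g K x"
  define C' where "C' = mixed_covd g K x"
  define D where "D = (\<chi> f. C f b c - C f c b)"
  have A: "mixed g K x = (\<lambda>i j. M $ i $ j)"
    by (simp add: mixed_eq_matrix M_def H_def fun_eq_iff)
  have "M ** H = H ** transpose M"
    using H_sym K_sym by (simp add: M_def H_def matrix_transpose_mul matrix_mul_assoc)
  then have MHD: "M *v (H *v D) = H *v (transpose M *v D)"
    by (simp only: matrix_vector_mul_assoc)
  have HD: "C' f b c - C' f c b = (H *v D) $ f" for f
    by (simp add: C'_def mixed_covd_def matrix_vector_mult_def D_def H_def C_def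
        sum_subtractf right_diff_distrib)
  have MD: "(transpose M *v D) $ e = act1 M C e b c - act1 M C e c b" for e
    by (simp add: vector_matrix_mult_def act1_def D_def sum_subtractf algebra_simps)
  have "(\<Sum>f\<in>UNIV. M $ d $ f * ((C' f b c - C' f c b) / 2)) = (M *v (H *v D)) $ d / 2"
    unfolding HD by (simp add: matrix_vector_mult_def sum_divide_distrib[symmetric])
  also have "\<dots> = (\<Sum>e\<in>UNIV. H $ d $ e * ((act1 M C e b c - act1 M C e c b) / 2))"
    unfolding MHD
    by (simp only: matrix_vector_mult_def[of H] vec_lambda_beta MD sum_divide_distrib
        times_divide_eq_right)
  finally have T1: "(\<Sum>f\<in>UNIV. M $ d $ f * ((C' f b c - C' f c b) / 2))
      = (\<Sum>e\<in>UNIV. H $ d $ e * ((act1 M C e b c - act1 M C e c b) / 2))" .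
  have "(\<Sum>f\<in>UNIV. (M $ f $ b * C' d c f - M $ f $ c * C' d b f) / 2)
      = (\<Sum>f\<in>UNIV. \<Sum>e\<in>UNIV. H $ d $ e * (M $ f $ b * C e c f - M $ f $ c * C e b f)) / 2"
    by (simp add: C'_def mixed_covd_def H_def C_def sum_distrib_left sum_divide_distrib[symmetric]
        sum_subtractf algebra_simps)
  also have "\<dots> = (\<Sum>e\<in>UNIV. H $ d $ e * (act3 M C e c b - act3 M C e b c)) / 2"
    by (subst sum.swap) (simp add: act3_def sum_distrib_left sum_subtractf algebra_simps)
  finally have T2: "(\<Sum>f\<in>UNIV. (M $ f $ b * C' d c f - M $ f $ c * C' d b f) / 2)
      = (\<Sum>e\<in>UNIV. H $ d $ e * ((act3 M C e c b - act3 M C e b c) / 2))"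
    by (simp add: sum_divide_distrib)
  show ?thesis
    unfolding nijenhuis_def A C'_def[symmetric] T1 T2 sum.distrib[symmetric]
    by (intro sum.cong) (simp_all add: torsion_form_def skew23_def H_def M_def C_def field_simps)
qed

lemma nij_cond_iff_alt3_act1:
  fixes g K :: "real^'n \<Rightarrow> real^'n^'n"
  assumes H_sym: "transpose (ginv g x) = ginv g x" and K_sym: "transpose (K x) = K x"
    and P: "P ** ginv g x = transpose N"
  shows "nij_cond g K x (\<lambda>a d. P $ a $ d)
    \<longleftrightarrow> alt3 (act1 N (torsion_form (ginv g x ** K x) (covd g K x))) = 0"
proof -
  define H where "H = ginv g x"
  define \<tau> where "\<tau> = torsion_form (ginv g x ** K x) (covd g K x)"
  have "(\<Sum>d\<in>UNIV. nijenhuis g K x d b c * P $ a $ d) = act1 N \<tau> a b c" for a b c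
  proof -
    have "(\<Sum>d\<in>UNIV. nijenhuis g K x d b c * P $ a $ d)
        = (\<Sum>d\<in>UNIV. \<Sum>e\<in>UNIV. P $ a $ d * H $ d $ e * \<tau> e b c)"
      by (simp add: nijenhuis_eq_torsion_form[where g = g and K = K and x = x, OF H_sym K_sym]
          H_def \<tau>_def sum_distrib_left sum_distrib_right mult_ac)
    also have "\<dots> = (\<Sum>e\<in>UNIV. (P ** H) $ a $ e * \<tau> e b c)"
      by (subst sum.swap) (simp add: matrix_matrix_mult_def sum_distrib_right)
    also have "\<dots> = act1 N \<tau> a b c"
      by (simp add: H_def P transpose_nth act1_def)
    finally show ?thesis .
  qed
  then show ?thesis
    unfolding nij_cond_def \<tau>_def by (simp add: fun_eq_iff)
qed

theorem theorem1:
  fixes U :: "(real^'n) set" and g K :: "real^'n \<Rightarrow> real^'n^'n"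
  assumes "pseudo_riemannian_on U g"
    and "killing_tensor_on U g K"
    and "\<forall>x\<in>U. nij_cond g K x (\<lambda>a d. g x $ a $ d)"
    and "\<forall>x\<in>U. nij_cond g K x (\<lambda>a d. K x $ a $ d)"
  shows "\<forall>x\<in>U. nij_cond g K x (\<lambda>a d. \<Sum>e\<in>UNIV. K x $ a $ e * mixed g K x e d)"
proof
  fix x assume x: "x \<in> U"
  define M where "M = ginv g x ** K x"
  define C where "C = covd g K x"
  have "open U" and K_sym_on: "\<forall>y\<in>U. transpose (K y) = K y"
    using assms(1,2) by (auto simp: pseudo_riemannian_on_def killing_tensor_on_def)
  then have K_sym: "transpose (K x) = K x"
    using x by blast
  note H_sym = pseudo_riemannian_ginv(1)[OF assms(1) x]
  note cond_iff = nij_cond_iff_alt3_act1[where g = g and K = K and x = x, OF H_sym K_sym,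
      folded M_def C_def]
  have "alt3 (torsion_form M C) = 0"
    using cond_iff[of "g x" "mat 1"] assms(3) x pseudo_riemannian_ginv(2)[OF assms(1) x]
    by (simp add: act1_mat_1)
  moreover have "alt3 (act1 M (torsion_form M C)) = 0"
    using cond_iff[of "K x" M] assms(4) x H_sym K_sym by (simp add: M_def matrix_transpose_mul)
  ultimately have "alt3 (act1 (M ** M) (torsion_form M C)) = 0"
    using alt3_torsion_form_third_condition[OF covd_swap12[OF \<open>open U\<close> x K_sym_on]
        killing_covd_cyclic[OF assms(2) x]]
    by (simp add: C_def act1_mult)
  moreover have "(K x ** M) ** ginv g x = transpose (M ** M)"
    using H_sym K_sym by (simp add: M_def matrix_transpose_mul matrix_mul_assoc)
  moreover have "(\<lambda>a d. \<Sum>e\<in>UNIV. K x $ a $ e * mixed g K x e d) = (\<lambda>a d. (K x ** M) $ a $ d)"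
    by (simp add: mixed_eq_matrix M_def matrix_matrix_mult_def)
  ultimately show "nij_cond g K x (\<lambda>a d. \<Sum>e\<in>UNIV. K x $ a $ e * mixed g K x e d)"
    using cond_iff by simp
qed

end
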